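(* Consider the networked closed-loop system described in the context. Assume: $Q,R,T$ are positive definite; $(Q^{1/2},A)$ is observable; $\rho(A-BK)<1$ and $\rho(A-B\bar K)<1$; $P=(A-B\bar K)^\top P(A-B\bar K)+Q+\bar K^\top R\bar K$; and the network satisfies $\mathrm{Prob}\big(\bigcap_{t\ge k}\{\gamma_{t-1}\theta_t=0\}\big)=0$ for all $k\ge0$. Suppose there exists $k_0$ such that $\gamma_{k_0-1}=1$, $\theta_{k_0}=1$, $x(k_0)-x_n(k_0)\in\mathbb{Z}_K$, and the MPC optimization problem is feasible. If the consistent actuator and the ancillary controller are used, then the MPC optimization problem is feasible and $x(k)\in\mathbb{X}$ and $u(k)\in\mathbb{U}$ for all $k\ge k_0$.
   Context: Plant: $x(k+1)=Ax(k)+Bu(k)+w(k)$ with $x(k)\in\mathbb{R}^{n_x}$, $u(k)\in\mathbb{R}^{n_u}$, $(A,B)$ stabilizable, and $w(k)\in\mathbb{W}=\{w: H_w w\le h_w\}$ for all $k$, where $\mathbb{W}$ is compact and contains the origin in its interior. State and input constraint sets $\mathbb{X}=\{x:H_x x\le h_x\}$, $\mathbb{U}=\{u:H_u u\le h_u\}$ are bounded and contain the origin in their interior. $\oplus$ is the Minkowski sum, $\ominus$ the Pontryagin difference, $M\mathbb{P}=\{Mp:p\in\mathbb{P}\}$. Network: binary variables $\theta_k$ ($=1$ iff the packet $U_k$ sent by the remote controller at time $k$ is received by the plant) and $\gamma_k$ ($=1$ iff the packet $X_k$ sent by the plant at time $k$ is received by the controller). Sets: $\mathbb{Z}_K=\bigoplus_{i=0}^\infty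 (A-BK)^i\mathbb{W}$; $\mathbb{X}_c=\mathbb{X}\ominus\mathbb{Z}_K$, $\mathbb{U}_c=\mathbb{U}\ominus(-K)\mathbb{Z}_K$. With $x_a=(x_n,\bar x,\bar u)$ and $A_a=\begin{bmatrix}A-B\bar K & B\bar K & B\\ 0& I&0\\0&0&I\end{bmatrix}$, $X_{f,\bar K}=\{x_a: A_a^k x_a\in\mathbb{X}_{a,\bar K}\ \forall k\ge0\}$ where $\mathbb{X}_{a,\bar K}=\{x_a: x_n\in\mathbb{X}_c,\ \bar u-\bar K(x_n-\bar x)\in\mathbb{U}_c\}$; for fixed $\lambda\in(0,1)$, $X^\lambda_{f,\bar K}=X_{f,\bar K}\cap\{(x_n,\bar x,\bar u):\bar x\in\lambda\mathbb{X}_c,\ \bar u\in\lambda\mathbb{U}_c\}$. Remote MPC at time $k$ (horizon $N$, reference $x_r$): minimize over $\mathbf{u}(0),\dots,\mathbf{u}(N-1),\bar x,\bar u$ the cost $\sum_{i=0}^{N-1}(\|\mathbf{x}(i)-\bar x\|_Q^2+\|\mathbf{u}(i)-\bar u\|_R^2)+\|\mathbf{x}(N)-\bar x\|_P^2+\|\bar x-x_r\|_T^2$ subject to $\mathbf{x}(i+1)=A\mathbf{x}(i)+B\mathbf{u}(i)$, $\mathbf{x}(i)\in\mathbb{X}_c$, $\mathbf{u}(i)\in\mathbb{U}_c$ for $i=0,\dots,N-1$, $\mathbf{x}(0)=\hat x(k|k-1)$, $(\mathbf{x}(N),\bar x,\bar u)\in X^\lambda_{f,\bar K}$, $(A-I)\bar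 x+B\bar u=0$. With optimal solution $\mathbf{u}^*_k,\bar x^*_k,\bar u^*_k$, the controller sends $U_k=\{\mathbf{u}^*_k,\ \bar u^*_k+\bar K\bar x^*_k,\ q_k\}$. Local side: $\Theta_k=\prod_{i=q_k+1}^k\theta_i$ if $\theta_k=1$ and $\Theta_k=0$ otherwise; $s_k=\Theta_k k+(1-\Theta_k)s_{k-1}$. Consistent actuator: $u_n(k)=\mathbf{u}^*_{s_k}(k-s_k)$ if $k-s_k<N$, else $u_n(k)=\bar u^*_{s_k}+\bar K\bar x^*_{s_k}-\bar K x_n(k)$. Nominal model $x_n(k+1)=Ax_n(k)+Bu_n(k)$. Ancillary controller $u(k)=u_n(k)-K(x(k)-x_n(k))$. The plant sends $X_k=\{x_n(k),s_k\}$. Remote estimator: $\hat x(k+1|k)=A\hat x(k|k)+B\hat u(k|k)$ with $\hat x(k|k)=\gamma_k x_n(k)+(1-\gamma_k)\hat x(k|k-1)$, $\hat u(k|k)=\gamma_k u_n(k)+(1-\gamma_k)\mathbf{u}^*_k(0)$ (with $u_n(k)$ recomputed remotely by the consistent actuator rule from $s_k$), and $q_{k+1}=\gamma_k k+(1-\gamma_k)q_k$. *)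

theory Defs
  imports "HOL-Analysis.Analysis"
begin

definition matpow :: "('a::semiring_1)^'n^'n \<Rightarrow> nat \<Rightarrow> 'a^'n^'n" where
  "matpow M i = ((\<lambda>Y. M ** Y) ^^ i) (mat 1)"

definition cmat :: "real^'n^'m \<Rightarrow> complex^'n^'m" where
  "cmat M = (\<chi> i j. complex_of_real (M $ i $ j))"

definition eigenvalues_c :: "real^'n^'n \<Rightarrow> complex set" where
  "eigenvalues_c M = {l. \<exists>v::complex^'n. v \<noteq> 0 \<and> cmat M *v v = l *s v}"

definition spec_rad :: "real^'n^'n \<Rightarrow> real" where
  "spec_rad M = Sup (cmod ` eigenvalues_c M)"

definition pos_def :: "real^'n^'n \<Rightarrow> bool" where
  "pos_def M \<longleftrightarrow> transpose M = M \<and> (\<forall>x. x \<noteq> 0 \<longrightarrow> 0 < x \<bullet> (M *v x))"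

definition pos_semidef :: "real^'n^'n \<Rightarrow> bool" where
  "pos_semidef M \<longleftrightarrow> transpose M = M \<and> (\<forall>x. 0 \<le> x \<bullet> (M *v x))"

definition msqrt :: "real^'n^'n \<Rightarrow> real^'n^'n" where
  "msqrt Q = (THE S. pos_semidef S \<and> S ** S = Q)"

text \<open>(C,A) observable: the observability matrix [C; CA; ...; CA^(n-1)] has full column rank n,
  i.e. trivial kernel.\<close>
definition observable :: "real^'n^'p \<Rightarrow> real^'n^'n \<Rightarrow> bool" where
  "observable C A \<longleftrightarrow>
     (\<forall>x. (\<forall>i<CARD('n). C *v (matpow A i *v x) = 0) \<longrightarrow> x = 0)"

definition stabilizable :: "real^'n^'n \<Rightarrow> real^'m^'n \<Rightarrow> bool" where
  "stabilizable A B \<longleftrightarrow> (\<exists>F::real^'n^'m. spec_rad (A - B ** F) < 1)"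

definition wnorm2 :: "real^'n^'n \<Rightarrow> real^'n \<Rightarrow> real" where
  "wnorm2 M v = v \<bullet> (M *v v)"

definition mink_series :: "real^'n^'n \<Rightarrow> (real^'n) set \<Rightarrow> (real^'n) set" where
  "mink_series M W = {z. \<exists>w. (\<forall>i. w i \<in> W) \<and> (\<lambda>i. matpow M i *v w i) sums z}"

definition pdiff :: "('a::ab_group_add) set \<Rightarrow> 'a set \<Rightarrow> 'a set" where
  "pdiff X Z = {x. \<forall>z\<in>Z. x + z \<in> X}"

definition aug_step :: "real^'n^'n \<Rightarrow> real^'m^'n \<Rightarrow> real^'n^'m
     \<Rightarrow> (real^'n) \<times> (real^'n) \<times> (real^'m) \<Rightarrow> (real^'n) \<times> (real^'n) \<times> (real^'m)" where
  "aug_step A B Kb = (\<lambda>(xn, xb, ub).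
      ((A - B ** Kb) *v xn + (B ** Kb) *v xb + B *v ub, xb, ub))"

definition Xa_set :: "real^'n^'m \<Rightarrow> (real^'n) set \<Rightarrow> (real^'m) set
     \<Rightarrow> ((real^'n) \<times> (real^'n) \<times> (real^'m)) set" where
  "Xa_set Kb Xc Uc = {(xn, xb, ub). xn \<in> Xc \<and> ub - Kb *v (xn - xb) \<in> Uc}"

definition Xf_set :: "real^'n^'n \<Rightarrow> real^'m^'n \<Rightarrow> real^'n^'m \<Rightarrow> (real^'n) set
     \<Rightarrow> (real^'m) set \<Rightarrow> ((real^'n) \<times> (real^'n) \<times> (real^'m)) set" where
  "Xf_set A B Kb Xc Uc = {xa. \<forall>k. (aug_step A B Kb ^^ k) xa \<in> Xa_set Kb Xc Uc}"

definition Xf_lam :: "real^'n^'n \<Rightarrow> real^'m^'n \<Rightarrow> real^'n^'m \<Rightarrow> (real^'n) set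
     \<Rightarrow> (real^'m) set \<Rightarrow> real \<Rightarrow> ((real^'n) \<times> (real^'n) \<times> (real^'m)) set" where
  "Xf_lam A B Kb Xc Uc lam = Xf_set A B Kb Xc Uc \<inter>
     {(xn, xb, ub). xb \<in> (\<lambda>v. lam *\<^sub>R v) ` Xc \<and> ub \<in> (\<lambda>v. lam *\<^sub>R v) ` Uc}"

fun pred :: "real^'n^'n \<Rightarrow> real^'m^'n \<Rightarrow> real^'n \<Rightarrow> (nat \<Rightarrow> real^'m) \<Rightarrow> nat \<Rightarrow> real^'n" where
  "pred A B x0 v 0 = x0"
| "pred A B x0 v (Suc i) = A *v pred A B x0 v i + B *v v i"

definition mpc_constr where
  "mpc_constr A B Kb Xc Uc lam N x0 v xb ub \<longleftrightarrow>
     (\<forall>i<N. pred A B x0 v i \<in> Xc \<and> v i \<in> Uc) \<and>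
     (pred A B x0 v N, xb, ub) \<in> Xf_lam A B Kb Xc Uc lam \<and>
     A *v xb - xb + B *v ub = 0"

definition mpc_cost where
  "mpc_cost A B Q R P T N xr x0 v xb ub =
     (\<Sum>i<N. wnorm2 Q (pred A B x0 v i - xb) + wnorm2 R (v i - ub))
     + wnorm2 P (pred A B x0 v N - xb) + wnorm2 T (xb - xr)"

definition mpc_feasible where
  "mpc_feasible A B Kb Xc Uc lam N x0 \<longleftrightarrow> (\<exists>v xb ub. mpc_constr A B Kb Xc Uc lam N x0 v xb ub)"

definition mpc_optimal where
  "mpc_optimal A B Kb Xc Uc lam N Q R P T xr x0 v xb ub \<longleftrightarrow>
     mpc_constr A B Kb Xc Uc lam N x0 v xb ub \<and>
     (\<forall>v' xb' ub'. mpc_constr A B Kb Xc Uc lam N x0 v' xb' ub' \<longrightarrow>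
        mpc_cost A B Q R P T N xr x0 v xb ub \<le> mpc_cost A B Q R P T N xr x0 v' xb' ub')"

definition Theta :: "(nat \<Rightarrow> bool) \<Rightarrow> (nat \<Rightarrow> nat) \<Rightarrow> nat \<Rightarrow> bool" where
  "Theta \<theta> q k \<longleftrightarrow> \<theta> k \<and> (\<forall>i. q k < i \<and> i \<le> k \<longrightarrow> \<theta> i)"

definition closed_loop where
  "closed_loop A B K Kb N W feas opt \<theta> \<gamma> w x u xn un s q xh ust xbar ubar \<longleftrightarrow>
     (\<forall>k. w k \<in> W) \<and>
     (\<forall>k. x (Suc k) = A *v x k + B *v u k + w k) \<and>
     (\<forall>k. xn (Suc k) = A *v xn k + B *v un k) \<and>
     (\<forall>k. u k = un k - K *v (x k - xn k)) \<and>
     (\<forall>k. un k = (if k - s k < N then ust (s k) (k - s k)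
                   else ubar (s k) + Kb *v xbar (s k) - Kb *v xn k)) \<and>
     s 0 = 0 \<and>
     (\<forall>k. s (Suc k) = (if Theta \<theta> q (Suc k) then Suc k else s k)) \<and>
     (\<forall>k. xh (Suc k) = A *v (if \<gamma> k then xn k else xh k)
                       + B *v (if \<gamma> k then un k else ust k 0)) \<and>
     (\<forall>k. q (Suc k) = (if \<gamma> k then k else q k)) \<and>
     (\<forall>k. feas (xh k) \<longrightarrow> opt (xh k) (ust k) (xbar k) (ubar k))"

end

theory Submission
  imports Defs
begin

(* The consistent actuator keeps the nominal state xn on the trajectory predicted by the last
   applied plan, continued by the terminal law once the plan is exhausted; invariance of the
   terminal set makes this trajectory and all its tails admissible. A plan is applied only when
   every plan packet since the last acknowledged measurement has arrived, and then the remote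
   predictor xh has replayed the nominal dynamics exactly, so each applied plan starts at the true
   nominal state. The error x - xn obeys e' = (A - B K) e + w and stays in the robust invariant
   set Z_K, so the tightened constraints on (xn, un) give x in X and u in U. *)

fun ca_state :: "real^'n^'n \<Rightarrow> real^'m^'n \<Rightarrow> real^'n^'m \<Rightarrow> nat \<Rightarrow> real^'n
    \<Rightarrow> (nat \<Rightarrow> real^'m) \<Rightarrow> real^'n \<Rightarrow> real^'m \<Rightarrow> nat \<Rightarrow> real^'n" where
  "ca_state A B Kb N x0 v xb ub 0 = x0"
| "ca_state A B Kb N x0 v xb ub (Suc m) = A *v ca_state A B Kb N x0 v xb ub m
     + B *v (if m < N then v m else ub + Kb *v xb - Kb *v ca_state A B Kb N x0 v xb ub m)"

definition ca_input :: "real^'n^'n \<Rightarrow> real^'m^'n \<Rightarrow> real^'n^'m \<Rightarrow> nat \<Rightarrow> real^'n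
    \<Rightarrow> (nat \<Rightarrow> real^'m) \<Rightarrow> real^'n \<Rightarrow> real^'m \<Rightarrow> nat \<Rightarrow> real^'m" where
  "ca_input A B Kb N x0 v xb ub m =
     (if m < N then v m else ub + Kb *v xb - Kb *v ca_state A B Kb N x0 v xb ub m)"

lemma ca_state_Suc:
  "ca_state A B Kb N x0 v xb ub (Suc m) =
     A *v ca_state A B Kb N x0 v xb ub m + B *v ca_input A B Kb N x0 v xb ub m"
  by (simp add: ca_input_def)

lemma ca_state_eq_pred: "m \<le> N \<Longrightarrow> ca_state A B Kb N x0 v xb ub m = pred A B x0 v m"
  by (induction m) auto

lemma aug_step_apply:
  "aug_step A B Kb (xn, xb, ub) = (A *v xn + B *v (ub + Kb *v xb - Kb *v xn), xb, ub)"
  by (simp add: aug_step_def algebra_simps matrix_vector_mul_assoc)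

lemma ca_state_after_horizon:
  "(ca_state A B Kb N x0 v xb ub (N + d), xb, ub) = (aug_step A B Kb ^^ d) (pred A B x0 v N, xb, ub)"
proof (induction d)
  case 0
  then show ?case by (simp add: ca_state_eq_pred)
next
  case (Suc d)
  then show ?case by (simp add: aug_step_apply flip: Suc.IH)
qed

lemma mpc_constr_ca_trajectory:
  assumes "mpc_constr A B Kb Xc Uc lam N x0 v xb ub"
  shows "ca_state A B Kb N x0 v xb ub m \<in> Xc \<and> ca_input A B Kb N x0 v xb ub m \<in> Uc"
proof (cases "m < N")
  case True
  then show ?thesis using assms by (simp add: mpc_constr_def ca_input_def ca_state_eq_pred)
next
  case False
  then obtain d where d: "m = N + d" using le_Suc_ex not_less by blast
  have "(pred A B x0 v N, xb, ub) \<in> Xf_set A B Kb Xc Uc"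
    using assms by (simp add: mpc_constr_def Xf_lam_def)
  then have "(ca_state A B Kb N x0 v xb ub m, xb, ub) \<in> Xa_set Kb Xc Uc"
    unfolding d ca_state_after_horizon Xf_set_def by blast
  then show ?thesis using False by (simp add: Xa_set_def ca_input_def algebra_simps)
qed

lemma Xf_set_funpow_closed:
  assumes "xa \<in> Xf_set A B Kb Xc Uc"
  shows "(aug_step A B Kb ^^ m) xa \<in> Xf_set A B Kb Xc Uc"
proof -
  have "(aug_step A B Kb ^^ k) ((aug_step A B Kb ^^ m) xa) = (aug_step A B Kb ^^ (k + m)) xa" for k
    by (simp add: funpow_add)
  with assms show ?thesis by (simp add: Xf_set_def)
qed

lemma mpc_constr_terminal_ca_state:
  assumes "mpc_constr A B Kb Xc Uc lam N x0 v xb ub"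
  shows "(ca_state A B Kb N x0 v xb ub (N + m), xb, ub) \<in> Xf_lam A B Kb Xc Uc lam"
proof -
  have "(pred A B x0 v N, xb, ub) \<in> Xf_set A B Kb Xc Uc"
    and "xb \<in> (\<lambda>v. lam *\<^sub>R v) ` Xc" "ub \<in> (\<lambda>v. lam *\<^sub>R v) ` Uc"
    using assms by (auto simp: mpc_constr_def Xf_lam_def)
  moreover from this(1) have "(ca_state A B Kb N x0 v xb ub (N + m), xb, ub) \<in> Xf_set A B Kb Xc Uc"
    unfolding ca_state_after_horizon by (rule Xf_set_funpow_closed)
  ultimately show ?thesis by (simp add: Xf_lam_def)
qed

lemma pred_ca_tail:
  "pred A B (ca_state A B Kb N x0 v xb ub m) (\<lambda>i. ca_input A B Kb N x0 v xb ub (m + i)) i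
     = ca_state A B Kb N x0 v xb ub (m + i)"
  by (induction i) (simp_all del: ca_state.simps add: ca_state_Suc)

lemma mpc_constr_ca_tail:
  assumes "mpc_constr A B Kb Xc Uc lam N x0 v xb ub"
  shows "mpc_constr A B Kb Xc Uc lam N (ca_state A B Kb N x0 v xb ub m)
           (\<lambda>i. ca_input A B Kb N x0 v xb ub (m + i)) xb ub"
  using assms mpc_constr_ca_trajectory[OF assms]
    mpc_constr_terminal_ca_state[OF assms, of m, unfolded add.commute[of N m]]
  by (simp add: mpc_constr_def pred_ca_tail)

lemma mpc_feasible_ca_state:
  "mpc_constr A B Kb Xc Uc lam N x0 v xb ub \<Longrightarrow>
     mpc_feasible A B Kb Xc Uc lam N (ca_state A B Kb N x0 v xb ub m)"
  unfolding mpc_feasible_def using mpc_constr_ca_tail by blast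

lemma mink_series_robust_invariant:
  assumes "e \<in> mink_series M W" and "d \<in> W"
  shows "M *v e + d \<in> mink_series M W"
proof -
  obtain ws where ws: "\<And>i. ws i \<in> W" and sums: "(\<lambda>i. matpow M i *v ws i) sums e"
    using assms(1) by (auto simp: mink_series_def)
  define ws' where "ws' = case_nat d ws"
  have "(\<lambda>i. M *v (matpow M i *v ws i)) sums (M *v e)"
    using bounded_linear.sums[OF matrix_vector_mul_bounded_linear sums] .
  then have "(\<lambda>i. matpow M (Suc i) *v ws' (Suc i)) sums (M *v e)"
    by (simp add: ws'_def matpow_def matrix_vector_mul_assoc)
  then have "(\<lambda>i. matpow M i *v ws' i) sums (M *v e + matpow M 0 *v ws' 0)"
    by (rule sums_Suc)
  then have "(\<lambda>i. matpow M i *v ws' i) sums (M *v e + d)"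
    by (simp add: ws'_def matpow_def)
  moreover have "ws' i \<in> W" for i
    using ws assms(2) by (simp add: ws'_def split: nat.split)
  ultimately show ?thesis by (auto simp: mink_series_def)
qed

lemma tube_constraints:
  fixes K :: "real^'n^'m"
  assumes "xn \<in> pdiff X Z" and "un \<in> pdiff U ((\<lambda>z. (- K) *v z) ` Z)" and "e \<in> Z"
  shows "xn + e \<in> X" and "un - K *v e \<in> U"
proof -
  have "(- K) *v e = - (K *v e)"
    by (simp add: vec_eq_iff matrix_vector_mult_def sum_negf)
  then show "xn + e \<in> X" and "un - K *v e \<in> U"
    using assms unfolding pdiff_def by force+
qed

locale consistent_actuator_loop =
  fixes A :: "real^'n^'n" and B :: "real^'m^'n" and K Kb :: "real^'n^'m"
    and N :: nat and W Xc :: "(real^'n) set" and Uc :: "(real^'m) set" and lam :: real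
    and opt :: "real^'n \<Rightarrow> (nat \<Rightarrow> real^'m) \<Rightarrow> real^'n \<Rightarrow> real^'m \<Rightarrow> bool"
    and \<theta> \<gamma> :: "nat \<Rightarrow> bool" and w x xn xh xbar :: "nat \<Rightarrow> real^'n"
    and u un ubar :: "nat \<Rightarrow> real^'m" and s q :: "nat \<Rightarrow> nat"
    and ust :: "nat \<Rightarrow> nat \<Rightarrow> real^'m"
  assumes loop: "closed_loop A B K Kb N W (mpc_feasible A B Kb Xc Uc lam N) opt
      \<theta> \<gamma> w x u xn un s q xh ust xbar ubar"
    and opt_admissible: "opt x0 v xb ub \<Longrightarrow> mpc_constr A B Kb Xc Uc lam N x0 v xb ub"
    and horizon_pos: "0 < N"
begin

abbreviation feasible :: "real^'n \<Rightarrow> bool" where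
  "feasible \<equiv> mpc_feasible A B Kb Xc Uc lam N"

abbreviation admissible_plan :: "nat \<Rightarrow> bool" where
  "admissible_plan j \<equiv> mpc_constr A B Kb Xc Uc lam N (xn j) (ust j) (xbar j) (ubar j)"

abbreviation plan_state :: "nat \<Rightarrow> nat \<Rightarrow> real^'n" where
  "plan_state j \<equiv> ca_state A B Kb N (xn j) (ust j) (xbar j) (ubar j)"

abbreviation plan_input :: "nat \<Rightarrow> nat \<Rightarrow> real^'m" where
  "plan_input j \<equiv> ca_input A B Kb N (xn j) (ust j) (xbar j) (ubar j)"

lemma
  shows disturbance: "w k \<in> W"
    and plant_Suc: "x (Suc k) = A *v x k + B *v u k + w k"
    and nominal_Suc: "xn (Suc k) = A *v xn k + B *v un k"
    and ancillary: "u k = un k - K *v (x k - xn k)"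
    and actuator: "un k = (if k - s k < N then ust (s k) (k - s k)
                           else ubar (s k) + Kb *v xbar (s k) - Kb *v xn k)"
    and s_0: "s 0 = 0"
    and s_Suc: "s (Suc k) = (if Theta \<theta> q (Suc k) then Suc k else s k)"
    and estimate_Suc: "xh (Suc k) = A *v (if \<gamma> k then xn k else xh k)
                                    + B *v (if \<gamma> k then un k else ust k 0)"
    and q_Suc: "q (Suc k) = (if \<gamma> k then k else q k)"
    and plan_opt: "feasible (xh k) \<Longrightarrow> opt (xh k) (ust k) (xbar k) (ubar k)"
  using loop unfolding closed_loop_def by blast+

lemma s_le: "s k \<le> k"
  by (induction k) (auto simp: s_0 s_Suc)

lemma s_at_Theta: "Theta \<theta> q k \<Longrightarrow> s k = k"
  by (cases k) (simp_all add: s_0 s_Suc)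

lemma nominal_follows_plan: "xn k = plan_state (s k) (k - s k)"
proof (induction k)
  case 0
  then show ?case by (simp add: s_0)
next
  case (Suc k)
  have "un k = plan_input (s k) (k - s k)"
    using actuator[of k] Suc.IH by (simp add: ca_input_def)
  then have "xn (Suc k) = plan_state (s k) (Suc (k - s k))"
    by (simp only: nominal_Suc ca_state_Suc flip: Suc.IH)
  then show ?case
    using s_le[of k] by (simp add: s_Suc Suc_diff_le)
qed

lemma nominal_input_follows_plan: "un k = plan_input (s k) (k - s k)"
  using actuator[of k] nominal_follows_plan[of k] by (simp add: ca_input_def)

lemma error_Suc: "x (Suc k) - xn (Suc k) = (A - B ** K) *v (x k - xn k) + w k"
  by (simp add: plant_Suc nominal_Suc ancillary algebra_simps
      flip: matrix_vector_mul_assoc)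

lemma error_in_mink_series:
  assumes "x k0 - xn k0 \<in> mink_series (A - B ** K) W" and "k0 \<le> k"
  shows "x k - xn k \<in> mink_series (A - B ** K) W"
  using assms(2,1)
  by (induction k rule: dec_induct)
    (simp_all add: error_Suc mink_series_robust_invariant disturbance)

lemma feasible_Suc:
  assumes "feasible (xh k)" and "admissible_plan (s k)"
  shows "feasible (xh (Suc k))"
proof (cases "\<gamma> k")
  case True
  then have "xh (Suc k) = A *v xn k + B *v un k"
    by (simp add: estimate_Suc)
  also have "\<dots> = plan_state (s k) (Suc (k - s k))"
    by (simp only: ca_state_Suc flip: nominal_follows_plan nominal_input_follows_plan)
  finally show ?thesis
    using mpc_feasible_ca_state assms(2) by metis
next
  case False
  then have "xh (Suc k) = ca_state A B Kb N (xh k) (ust k) (xbar k) (ubar k) 1"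
    using horizon_pos by (simp add: estimate_Suc)
  then show ?thesis
    using mpc_feasible_ca_state opt_admissible plan_opt assms(1) by metis
qed

context
  fixes k0 :: nat
  assumes start_pos: "0 < k0" and start_ack: "\<gamma> (k0 - 1)" and start_applied: "\<theta> k0"
begin

lemma q_start: "q k0 = k0 - 1"
  using q_Suc[of "k0 - 1"] start_ack start_pos by simp

lemma q_less: "k0 \<le> k \<Longrightarrow> q k < k"
  by (induction k rule: dec_induct) (use start_pos in \<open>simp_all add: q_start q_Suc\<close>)

lemma Theta_start: "Theta \<theta> q k0"
proof -
  have "i = k0" if "k0 - 1 < i" and "i \<le> k0" for i
    using that by linarith
  then show ?thesis using start_applied by (auto simp: Theta_def q_start)
qed

lemma estimate_exact:
  assumes "k0 \<le> k" and "\<forall>i. q k < i \<and> i \<le> k \<longrightarrow> \<theta> i"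
  shows "xh k = xn k"
  using assms
proof (induction k rule: dec_induct)
  case base
  show ?case
    using estimate_Suc[of "k0 - 1"] nominal_Suc[of "k0 - 1"] start_ack start_pos by simp
next
  case (step k)
  show ?case
  proof (cases "\<gamma> k")
    case True
    then show ?thesis by (simp add: estimate_Suc nominal_Suc)
  next
    case False
    then have applied: "\<forall>i. q k < i \<and> i \<le> k \<longrightarrow> \<theta> i"
      using step.prems by (simp add: q_Suc)
    then have "Theta \<theta> q k"
      using q_less[OF step.hyps(1)] by (simp add: Theta_def)
    then have "un k = ust k 0"
      using actuator[of k] horizon_pos by (simp add: s_at_Theta)
    then show ?thesis
      using False step.IH[OF applied] by (simp add: estimate_Suc nominal_Suc)
  qed
qed

lemma estimate_exact_at_update: "k0 \<le> k \<Longrightarrow> Theta \<theta> q k \<Longrightarrow> xh k = xn k"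
  by (simp add: Theta_def estimate_exact)

lemma feasible_and_admissible_plan:
  assumes "feasible (xh k0)" and "k0 \<le> k"
  shows "feasible (xh k) \<and> admissible_plan (s k)"
  using assms(2)
proof (induction k rule: dec_induct)
  case base
  have "xh k0 = xn k0" and "s k0 = k0"
    using estimate_exact_at_update s_at_Theta Theta_start by simp_all
  then show ?case
    using assms(1) plan_opt opt_admissible by metis
next
  case (step k)
  then have feasible: "feasible (xh (Suc k))"
    using feasible_Suc by blast
  show ?case
  proof (cases "Theta \<theta> q (Suc k)")
    case True
    then have "xh (Suc k) = xn (Suc k)"
      using estimate_exact_at_update step.hyps(1) by simp
    then show ?thesis
      using True feasible plan_opt[of "Suc k"] opt_admissible by (simp add: s_Suc)
  next
    case False
    then show ?thesis using step.IH feasible by (simp add: s_Suc)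
  qed
qed

lemma nominal_admissible:
  assumes "feasible (xh k0)" and "k0 \<le> k"
  shows "xn k \<in> Xc \<and> un k \<in> Uc"
  using feasible_and_admissible_plan[OF assms] mpc_constr_ca_trajectory
    nominal_follows_plan nominal_input_follows_plan
  by metis

lemma robust_constraint_satisfaction:
  assumes "Xc = pdiff X (mink_series (A - B ** K) W)"
    and "Uc = pdiff U ((\<lambda>z. (- K) *v z) ` mink_series (A - B ** K) W)"
    and "x k0 - xn k0 \<in> mink_series (A - B ** K) W" and "feasible (xh k0)" and "k0 \<le> k"
  shows "feasible (xh k) \<and> x k \<in> X \<and> u k \<in> U"
proof -
  have "xn k \<in> pdiff X (mink_series (A - B ** K) W)"
    and "un k \<in> pdiff U ((\<lambda>z. (- K) *v z) ` mink_series (A - B ** K) W)"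
    using nominal_admissible[OF assms(4,5)] assms(1,2) by simp_all
  from tube_constraints[OF this error_in_mink_series[OF assms(3,5)]]
  have "x k \<in> X" and "u k \<in> U" by (simp_all add: ancillary)
  then show ?thesis
    using feasible_and_admissible_plan assms(4,5) by simp
qed

end

end

theorem proposition2:
  fixes A :: "real^'n^'n" and B :: "real^'m^'n" and K Kb :: "real^'n^'m"
    and Q P T :: "real^'n^'n" and R :: "real^'m^'m"
    and Hx :: "real^'n^'px" and hx :: "real^'px"
    and Hu :: "real^'m^'pu" and hu :: "real^'pu"
    and Hw :: "real^'n^'pw" and hw :: "real^'pw"
    and X W :: "(real^'n) set" and U :: "(real^'m) set"
    and lam :: real and N :: nat and xr :: "real^'n"
    and M :: "'w measure" and \<theta> \<gamma> :: "'w \<Rightarrow> nat \<Rightarrow> bool"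
    and w x xn xh xbar :: "'w \<Rightarrow> nat \<Rightarrow> real^'n"
    and u un ubar :: "'w \<Rightarrow> nat \<Rightarrow> real^'m"
    and s q :: "'w \<Rightarrow> nat \<Rightarrow> nat"
    and ust :: "'w \<Rightarrow> nat \<Rightarrow> nat \<Rightarrow> real^'m"
  assumes X_def: "X = {v. \<forall>i. (Hx *v v) $ i \<le> hx $ i}"
    and U_def: "U = {v. \<forall>i. (Hu *v v) $ i \<le> hu $ i}"
    and W_def: "W = {v. \<forall>i. (Hw *v v) $ i \<le> hw $ i}"
    and "compact W" and "0 \<in> interior W"
    and "bounded X" and "0 \<in> interior X"
    and "bounded U" and "0 \<in> interior U"
    and "stabilizable A B"
    and "pos_def Q" and "pos_def R" and "pos_def T"
    and "observable (msqrt Q) A"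
    and "spec_rad (A - B ** K) < 1" and "spec_rad (A - B ** Kb) < 1"
    and "P = transpose (A - B ** Kb) ** P ** (A - B ** Kb) + Q + transpose Kb ** R ** Kb"
    and "0 < lam" and "lam < 1" and "0 < N"
    and "emeasure M (space M) = 1"
    and "\<forall>t. {\<omega> \<in> space M. \<theta> \<omega> t} \<in> sets M"
    and "\<forall>t. {\<omega> \<in> space M. \<gamma> \<omega> t} \<in> sets M"
    and "\<forall>k. measure M {\<omega> \<in> space M. \<forall>t\<ge>Suc k. \<not> (\<gamma> \<omega> (t - 1) \<and> \<theta> \<omega> t)} = 0"
    and "\<forall>\<omega>\<in>space M. closed_loop A B K Kb N W
           (mpc_feasible A B Kb (pdiff X (mink_series (A - B ** K) W))
              (pdiff U ((\<lambda>z. (- K) *v z) ` mink_series (A - B ** K) W)) lam N)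
           (mpc_optimal A B Kb (pdiff X (mink_series (A - B ** K) W))
              (pdiff U ((\<lambda>z. (- K) *v z) ` mink_series (A - B ** K) W)) lam N Q R P T xr)
           (\<theta> \<omega>) (\<gamma> \<omega>) (w \<omega>) (x \<omega>) (u \<omega>) (xn \<omega>) (un \<omega>) (s \<omega>) (q \<omega>)
           (xh \<omega>) (ust \<omega>) (xbar \<omega>) (ubar \<omega>)"
  shows "\<forall>\<omega>\<in>space M. \<forall>k0.
           (1 \<le> k0 \<and> \<gamma> \<omega> (k0 - 1) \<and> \<theta> \<omega> k0 \<and>
            x \<omega> k0 - xn \<omega> k0 \<in> mink_series (A - B ** K) W \<and>
            mpc_feasible A B Kb (pdiff X (mink_series (A - B ** K) W))
              (pdiff U ((\<lambda>z. (- K) *v z) ` mink_series (A - B ** K) W)) lam N (xh \<omega> k0))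
           \<longrightarrow> (\<forall>k\<ge>k0. mpc_feasible A B Kb (pdiff X (mink_series (A - B ** K) W))
                          (pdiff U ((\<lambda>z. (- K) *v z) ` mink_series (A - B ** K) W)) lam N (xh \<omega> k)
                        \<and> x \<omega> k \<in> X \<and> u \<omega> k \<in> U)"
proof (intro ballI allI impI)
  fix \<omega> k0 k
  let ?Z = "mink_series (A - B ** K) W"
  assume "\<omega> \<in> space M" and start: "1 \<le> k0 \<and> \<gamma> \<omega> (k0 - 1) \<and> \<theta> \<omega> k0 \<and> x \<omega> k0 - xn \<omega> k0 \<in> ?Z \<and>
    mpc_feasible A B Kb (pdiff X ?Z) (pdiff U ((\<lambda>z. (- K) *v z) ` ?Z)) lam N (xh \<omega> k0)"
    and "k0 \<le> k"
  interpret consistent_actuator_loop A B K Kb N W "pdiff X ?Z" "pdiff U ((\<lambda>z. (- K) *v z) ` ?Z)"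
    lam "mpc_optimal A B Kb (pdiff X ?Z) (pdiff U ((\<lambda>z. (- K) *v z) ` ?Z)) lam N Q R P T xr"
    "\<theta> \<omega>" "\<gamma> \<omega>" "w \<omega>" "x \<omega>" "xn \<omega>" "xh \<omega>" "xbar \<omega>" "u \<omega>" "un \<omega>" "ubar \<omega>" "s \<omega>" "q \<omega>" "ust \<omega>"
    by unfold_locales
      (use assms(25) \<open>\<omega> \<in> space M\<close> in blast, simp_all add: mpc_optimal_def \<open>0 < N\<close>)
  have "0 < k0" using start by simp
  show "mpc_feasible A B Kb (pdiff X ?Z) (pdiff U ((\<lambda>z. (- K) *v z) ` ?Z)) lam N (xh \<omega> k)
      \<and> x \<omega> k \<in> X \<and> u \<omega> k \<in> U"
    using robust_constraint_satisfaction[OF \<open>0 < k0\<close> _ _ refl refl] start \<open>k0 \<le> k\<close> by blast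
qed

end
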